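(* Regard the grid parabola $P_t$ and the reference parabola $\Pi_t\colon y=x^2/(2H_t)$ as graphs of functions $P_t(x)$, $\Pi_t(x)$ on $\mathbb R$. Then $\sup_{x\in\mathbb R}|P_t(x)-\Pi_t(x)|=O(t^2\log t)$ as $t\to\infty$.
   Context: Fix an integer $t\ge1$. Let $S_t$ be the set of rational numbers $s$ which, written in lowest terms as $s=a/b$ with $a\in\mathbb Z$ and $b$ a positive integer, satisfy $b\le t$. For $s=a/b\in S_t$ let $v_s=\lfloor t/b\rfloor\,(b,a)$, and $V_t=\{v_s:s\in S_t\}$. The grid parabola $P_t$ is the infinite convex polygonal chain obtained by concatenating the vectors of $V_t$ in order of increasing slope, positioned so that the edge given by $(t,0)$ goes from $(-t/2,0)$ to $(t/2,0)$. $H_t=\sum_{1\le y\le x\le t,\ \gcd(x,y)=1}\lfloor t/x\rfloor\,x$. *)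

theory Defs
  imports "HOL-Analysis.Analysis"
begin

definition S :: "nat \<Rightarrow> rat set" where
  "S t = {s. snd (quotient_of s) \<le> int t}"

definition vec :: "nat \<Rightarrow> rat \<Rightarrow> real \<times> real" where
  "vec t s = (case quotient_of s of (a, b) \<Rightarrow>
      (real_of_int ((int t div b) * b), real_of_int ((int t div b) * a)))"

text \<open>Starting point of the edge of slope s in the chain: edges are concatenated
  by increasing slope, the edge of slope 0 (the vector (t,0)) runs from
  (-t/2,0) to (t/2,0).\<close>
definition edge_start :: "nat \<Rightarrow> rat \<Rightarrow> real \<times> real" where
  "edge_start t s =
     (if 0 \<le> s then (- real t / 2, 0) + (\<Sum>s'\<in>{s'\<in>S t. 0 \<le> s' \<and> s' < s}. vec t s')
      else (- real t / 2, 0) - (\<Sum>s'\<in>{s'\<in>S t. s \<le> s' \<and> s' < 0}. vec t s'))"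

definition grid_parabola :: "nat \<Rightarrow> (real \<times> real) set" where
  "grid_parabola t = (\<Union>s\<in>S t. closed_segment (edge_start t s) (edge_start t s + vec t s))"

definition P :: "nat \<Rightarrow> real \<Rightarrow> real" where
  "P t x = (THE y. (x, y) \<in> grid_parabola t)"

definition H :: "nat \<Rightarrow> nat" where
  "H t = (\<Sum>(x, y)\<in>{(x, y). 1 \<le> y \<and> y \<le> x \<and> x \<le> t \<and> coprime x y}. (t div x) * x)"

definition Pi_ref :: "nat \<Rightarrow> real \<Rightarrow> real" where
  "Pi_ref t x = x\<^sup>2 / (2 * real (H t))"

end

theory Submission
  imports Defs
begin

text \<open>The edge of slope s of the grid parabola starts at (X(s), Y(s)), where X(s) + t/2 and Y(s)
  are the sums of w(r) and w(r) r over the slopes r \<in> S_t \<inter> [0, s), and w(a/b) = \<lfloor>t/b\<rfloor> b is the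
  width of the edge of slope a/b. Widths are 1-periodic in the slope, which gives X(n) = n H_t - t/2
  and Y(n) = (H_t n^2 - t n)/2 for integers n, so 2 H_t Y(n) - X(n)^2 = -t^2/4. Adding up the
  increments from \<lfloor>s\<rfloor> to s shows that 2 H_t Y - X^2 stays within O(H_t E) of -t^2/4 along
  the whole chain, where E bounds |H_t r - X(r)|. Up to t/2, H_t r - X(r) is the discrepancy
  between H_t \<sigma> and the width-weighted number of reduced fractions in [0, \<sigma>), \<sigma> the fractional
  part of r. Counting the fractions with a fixed denominator b by a sieve over the prime factors
  of b costs an error of at most 2 \<cdot> 2^\<omega>(b) \<le> 2 d(b), and summing over b \<le> t gives
  E = O(t^2 log t).\<close>

lemma finite_nat_below: "finite {a :: nat. real a < x \<and> Q a}"
proof -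
  have "{a :: nat. real a < x \<and> Q a} \<subseteq> {..nat \<lceil>x\<rceil>}" by (auto, linarith)
  then show ?thesis by (rule finite_subset) auto
qed

lemma int_difference_eq:
  fixes f g :: "int \<Rightarrow> 'a :: ab_group_add"
  assumes "\<And>n. f (n + 1) - f n = g (n + 1) - g n"
  shows "f n - f 0 = g n - g 0"
proof (induction n rule: int_induct[where k = 0])
  case (step1 i)
  have "f (i + 1) - f 0 = (f (i + 1) - f i) + (f i - f 0)" by simp
  with step1 assms[of i] show ?case by simp
next
  case (step2 i)
  have "f (i - 1) - f 0 = (f i - f 0) - (f i - f (i - 1))" by simp
  with step2 assms[of "i - 1"] show ?case by simp
qed simp

lemma power2_sum_eq_sum_prefix:
  fixes w :: "'a :: linorder \<Rightarrow> 'b :: comm_ring_1"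
  assumes "finite A"
  shows "(sum w A)\<^sup>2 = (\<Sum>r\<in>A. w r * (w r + 2 * sum w {q\<in>A. q < r}))"
  using assms
proof (induction A rule: finite_linorder_max_induct)
  case (insert b A)
  have "{q \<in> insert b A. q < r} = {q\<in>A. q < r}" if "r \<in> A" for r
    using insert.hyps(2) that by force
  moreover have "{q \<in> insert b A. q < b} = A" using insert.hyps(2) by auto
  moreover have "b \<notin> A" using insert.hyps(2) by auto
  ultimately have "(\<Sum>r\<in>insert b A. w r * (w r + 2 * sum w {q\<in>insert b A. q < r}))
      = w b * (w b + 2 * sum w A) + (sum w A)\<^sup>2"
    using insert.hyps(1) insert.IH by simp
  also have "\<dots> = (sum w (insert b A))\<^sup>2"
    using insert.hyps(1) \<open>b \<notin> A\<close> by (simp add: power2_eq_square algebra_simps)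
  finally show ?case ..
qed simp

lemma closed_segment_graph_iff:
  fixes x0 y0 w m x y :: real
  assumes "0 < w"
  shows "(x, y) \<in> closed_segment (x0, y0) (x0 + w, y0 + w * m) \<longleftrightarrow>
         x0 \<le> x \<and> x \<le> x0 + w \<and> y = y0 + m * (x - x0)"
proof
  assume "(x, y) \<in> closed_segment (x0, y0) (x0 + w, y0 + w * m)"
  then obtain u where u: "0 \<le> u" "u \<le> 1" "x = x0 + u * w" "y = y0 + u * w * m"
    by (auto simp: in_segment algebra_simps)
  then show "x0 \<le> x \<and> x \<le> x0 + w \<and> y = y0 + m * (x - x0)"
    using assms by (auto simp: algebra_simps intro: mult_left_le_one_le)
next
  assume h: "x0 \<le> x \<and> x \<le> x0 + w \<and> y = y0 + m * (x - x0)"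
  define u where "u = (x - x0) / w"
  have "0 \<le> u" "u \<le> 1" using h assms by (auto simp: u_def field_simps)
  moreover have "x = x0 + u * w" "y = y0 + u * w * m"
    using h assms by (simp_all add: u_def)
  then have "(x, y) = (1 - u) *\<^sub>R (x0, y0) + u *\<^sub>R (x0 + w, y0 + w * m)"
    by (simp add: algebra_simps)
  ultimately show "(x, y) \<in> closed_segment (x0, y0) (x0 + w, y0 + w * m)"
    by (auto simp: in_segment)
qed

section \<open>Reduced fractions\<close>

definition rat_num :: "rat \<Rightarrow> int" where
  "rat_num r = fst (quotient_of r)"

definition rat_den :: "rat \<Rightarrow> int" where
  "rat_den r = snd (quotient_of r)"

lemma quotient_of_num_den: "quotient_of r = (rat_num r, rat_den r)"
  by (simp add: rat_num_def rat_den_def)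

lemma rat_den_pos: "0 < rat_den r"
  by (simp add: rat_den_def quotient_of_denom_pos')

lemma rat_num_den_eq: "r = of_int (rat_num r) / of_int (rat_den r)"
  using quotient_of_div[OF quotient_of_num_den] .

lemma coprime_rat_num_den: "coprime (rat_num r) (rat_den r)"
  using quotient_of_coprime[OF quotient_of_num_den] .

lemma of_int_rat_num: "of_int (rat_num r) = r * of_int (rat_den r)"
  using rat_den_pos[of r] by (subst (2) rat_num_den_eq[of r]) simp

lemma of_rat_num_den: "(of_rat r :: 'a :: field_char_0) = of_int (rat_num r) / of_int (rat_den r)"
  by (subst rat_num_den_eq[of r]) (simp add: of_rat_divide)

lemma rat_num_nonneg: "0 \<le> r \<Longrightarrow> 0 \<le> rat_num r"
proof -
  assume "0 \<le> r"
  then have "(0::rat) \<le> of_int (rat_num r)"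
    using rat_den_pos[of r] by (simp add: of_int_rat_num)
  then show ?thesis by simp
qed

lemma quotient_of_reduced:
  "0 < b \<Longrightarrow> coprime a b \<Longrightarrow> quotient_of (of_int a / of_int b) = (a, b)"
  by (simp add: Fract_of_int_quotient[symmetric] quotient_of_Fract)

lemma rat_den_add_of_int: "rat_den (r + of_int k) = rat_den r"
proof -
  have "r + of_int k = of_int (rat_num r + k * rat_den r) / of_int (rat_den r)"
    using rat_den_pos[of r] by (subst rat_num_den_eq[of r]) (simp add: field_simps)
  moreover have "coprime (rat_num r + k * rat_den r) (rat_den r)"
    using coprime_rat_num_den[of r]
    by (metis coprime_iff_gcd_eq_1 gcd.commute gcd_add_mult add.commute)
  ultimately show ?thesis
    using quotient_of_reduced[OF rat_den_pos] by (metis rat_den_def snd_conv)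
qed

lemma rat_den_uminus: "rat_den (- r) = rat_den r"
  by (simp add: rat_den_def rat_uminus_code split: prod.split)

lemma rat_den_one_minus: "rat_den (1 - r) = rat_den r"
  using rat_den_add_of_int[of "- r" 1] by (simp add: rat_den_uminus)

section \<open>Slopes and edge widths\<close>

lemma mem_S_iff: "r \<in> S t \<longleftrightarrow> rat_den r \<le> int t"
  by (simp add: S_def rat_den_def)

lemma of_int_mem_S: "1 \<le> t \<Longrightarrow> of_int n \<in> S t"
  by (simp add: mem_S_iff rat_den_def)

lemma add_of_int_mem_S_iff: "r + of_int k \<in> S t \<longleftrightarrow> r \<in> S t"
  by (simp add: mem_S_iff rat_den_add_of_int)

lemma one_minus_mem_S_iff: "1 - r \<in> S t \<longleftrightarrow> r \<in> S t"
  by (simp add: mem_S_iff rat_den_one_minus)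

definition width :: "nat \<Rightarrow> rat \<Rightarrow> real" where
  "width t r = of_int ((int t div rat_den r) * rat_den r)"

lemma vec_eq: "vec t r = (width t r, width t r * of_rat r)"
  using rat_den_pos[of r] by (simp add: vec_def quotient_of_num_den width_def of_rat_num_den)

lemma width_ge_1: "r \<in> S t \<Longrightarrow> 1 \<le> width t r"
proof -
  assume "r \<in> S t"
  then have "0 < int t div rat_den r"
    using rat_den_pos[of r] pos_imp_zdiv_pos_iff by (simp add: mem_S_iff)
  then have "1 \<le> (int t div rat_den r) * rat_den r"
    using rat_den_pos[of r] mult_mono[of 1 "int t div rat_den r" 1 "rat_den r"] by simp
  then show ?thesis
    unfolding width_def by (metis of_int_1 of_int_le_iff)
qed

lemma width_nonneg: "r \<in> S t \<Longrightarrow> 0 \<le> width t r"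
  using width_ge_1 by fastforce

lemma width_le: "width t r \<le> real t"
proof -
  have "(int t div rat_den r) * rat_den r \<le> int t"
    using rat_den_pos[of r]
    by (metis div_mult_mod_eq le_add_same_cancel1 mult.commute pos_mod_sign)
  then show ?thesis
    unfolding width_def by (metis of_int_le_iff of_int_of_nat_eq)
qed

lemma width_add_of_int: "width t (r + of_int k) = width t r"
  by (simp add: width_def rat_den_add_of_int)

lemma width_one_minus: "width t (1 - r) = width t r"
  by (simp add: width_def rat_den_one_minus)

lemma width_zero: "width t 0 = real t"
  by (simp add: width_def rat_den_def)

definition slopes :: "nat \<Rightarrow> rat \<Rightarrow> rat \<Rightarrow> rat set" where
  "slopes t a b = {r \<in> S t. a \<le> r \<and> r < b}"

lemma finite_slopes: "finite (slopes t a b)"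
proof -
  define M where "M = \<lceil>\<bar>a\<bar> + \<bar>b\<bar>\<rceil> * int t"
  have "quotient_of ` slopes t a b \<subseteq> {-M..M} \<times> {1..int t}"
  proof
    fix q assume "q \<in> quotient_of ` slopes t a b"
    then obtain r where r: "r \<in> slopes t a b" "q = quotient_of r" by auto
    have d: "rat_den r \<le> int t" "0 < rat_den r"
      using r by (auto simp: slopes_def mem_S_iff rat_den_pos)
    have "\<bar>r\<bar> \<le> \<bar>a\<bar> + \<bar>b\<bar>" using r by (auto simp: slopes_def)
    then have "\<bar>r\<bar> * of_int (rat_den r) \<le> (\<bar>a\<bar> + \<bar>b\<bar>) * of_int (int t)"
      using d by (intro mult_mono) auto
    also have "\<dots> \<le> of_int \<lceil>\<bar>a\<bar> + \<bar>b\<bar>\<rceil> * of_int (int t)"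
      by (intro mult_right_mono) auto
    finally have "of_int \<bar>rat_num r\<bar> \<le> (of_int M :: rat)"
      using d by (simp add: M_def of_int_rat_num abs_mult)
    then have "\<bar>rat_num r\<bar> \<le> M" by (simp only: of_int_le_iff)
    then show "q \<in> {-M..M} \<times> {1..int t}" using r d by (auto simp: quotient_of_num_den)
  qed
  then have "finite (quotient_of ` slopes t a b)" by (rule finite_subset) auto
  moreover have "inj_on quotient_of (slopes t a b)" by (auto intro: inj_onI quotient_of_inject)
  ultimately show ?thesis using finite_imageD by blast
qed

lemma slopes_empty: "b \<le> a \<Longrightarrow> slopes t a b = {}"
  by (auto simp: slopes_def)

lemma sum_slopes_split:
  assumes "a \<le> b" "b \<le> c"
  shows "sum f (slopes t a c) = sum f (slopes t a b) + sum f (slopes t b c)"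
proof -
  have "slopes t a c = slopes t a b \<union> slopes t b c" "slopes t a b \<inter> slopes t b c = {}"
    using assms by (auto simp: slopes_def)
  then show ?thesis by (simp add: sum.union_disjoint finite_slopes)
qed

lemma sum_slopes_add_of_int:
  "sum f (slopes t (a + of_int k) (b + of_int k)) = sum (\<lambda>r. f (r + of_int k)) (slopes t a b)"
proof -
  have "slopes t (a + of_int k) (b + of_int k) = (\<lambda>r. r + of_int k) ` slopes t a b"
  proof (intro equalityI subsetI)
    fix x assume "x \<in> slopes t (a + of_int k) (b + of_int k)"
    then have "x - of_int k \<in> slopes t a b"
      using add_of_int_mem_S_iff[of "x - of_int k" k t] by (auto simp: slopes_def)
    then show "x \<in> (\<lambda>r. r + of_int k) ` slopes t a b" by force
  qed (auto simp: slopes_def add_of_int_mem_S_iff)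
  then show ?thesis by (simp add: sum.reindex inj_on_def)
qed

lemma sum_slopes_unit_interval:
  "sum f (slopes t (of_int n) (of_int n + 1)) = sum (\<lambda>r. f (r + of_int n)) (slopes t 0 1)"
  using sum_slopes_add_of_int[of f t 0 n 1] by (simp add: add.commute)

lemma sum_width_slopes_mono:
  "slopes t a b \<subseteq> slopes t c d \<Longrightarrow> sum (width t) (slopes t a b) \<le> sum (width t) (slopes t c d)"
  by (intro sum_mono2 finite_slopes) (auto simp: slopes_def width_nonneg)

section \<open>Counting slopes by denominator\<close>

lemma sum_width_slopes_eq_sum_fractions:
  "(\<Sum>(b, a)\<in>Sigma {1..t} (\<lambda>b. {a. real a < of_rat \<sigma> * real b \<and> coprime a b}). real ((t div b) * b))
     = sum (width t) (slopes t 0 \<sigma>)"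
  (is "sum _ ?Q = _")
proof (rule sum.reindex_bij_witness[where i = "\<lambda>r. (nat (rat_den r), nat (rat_num r))"
      and j = "\<lambda>(b, a). of_nat a / of_nat b"])
  fix p assume "p \<in> ?Q"
  then obtain b a where p: "p = (b, a)" "1 \<le> b" "b \<le> t" "real a < of_rat \<sigma> * real b" "coprime a b"
    by auto
  then have q: "quotient_of (of_nat a / of_nat b) = (int a, int b)"
    using quotient_of_reduced[of "int b" "int a"] by simp
  show "(nat (rat_den (case p of (b, a) \<Rightarrow> of_nat a / of_nat b)),
         nat (rat_num (case p of (b, a) \<Rightarrow> of_nat a / of_nat b))) = p"
    using p q by (simp add: rat_den_def rat_num_def)
  have "(of_rat (of_nat a / of_nat b) :: real) < of_rat \<sigma>"
    using p by (simp add: of_rat_divide field_simps)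
  then show "(case p of (b, a) \<Rightarrow> of_nat a / of_nat b) \<in> slopes t 0 \<sigma>"
    using p q by (simp add: slopes_def mem_S_iff rat_den_def of_rat_less)
  show "width t (case p of (b, a) \<Rightarrow> of_nat a / of_nat b) = (case p of (b, a) \<Rightarrow> real ((t div b) * b))"
    using p q by (simp add: width_def rat_den_def flip: of_nat_div zdiv_int)
next
  fix r assume r: "r \<in> slopes t 0 \<sigma>"
  have nn: "0 \<le> rat_num r" using r by (simp add: slopes_def rat_num_nonneg)
  have dp: "0 < rat_den r" by (rule rat_den_pos)
  show "(case (nat (rat_den r), nat (rat_num r)) of (b, a) \<Rightarrow> of_nat a / of_nat b) = r"
    using nn dp by (simp add: rat_num_den_eq[of r, symmetric])
  have "real (nat (rat_num r)) = of_rat r * of_int (rat_den r)"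
    using nn dp by (simp add: of_rat_num_den)
  also have "\<dots> < of_rat \<sigma> * of_int (rat_den r)"
    using r dp by (simp add: slopes_def of_rat_less)
  finally have "real (nat (rat_num r)) < of_rat \<sigma> * real (nat (rat_den r))"
    using dp by simp
  moreover have "coprime (nat (rat_num r)) (nat (rat_den r))"
    using coprime_rat_num_den[of r] nn dp by (simp add: coprime_int_iff[symmetric])
  ultimately show "(nat (rat_den r), nat (rat_num r)) \<in> ?Q"
    using r dp by (auto simp: slopes_def mem_S_iff)
qed

definition coprime_below :: "nat \<Rightarrow> real \<Rightarrow> nat" where
  "coprime_below b x = card {a. real a < x \<and> coprime a b}"

lemma sum_width_slopes_eq:
  "sum (width t) (slopes t 0 \<sigma>) =
     (\<Sum>b\<in>{1..t}. real ((t div b) * b) * real (coprime_below b (of_rat \<sigma> * real b)))"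
proof -
  have "(\<Sum>b\<in>{1..t}. real ((t div b) * b) * real (coprime_below b (of_rat \<sigma> * real b)))
      = (\<Sum>b\<in>{1..t}. \<Sum>a\<in>{a. real a < of_rat \<sigma> * real b \<and> coprime a b}. real ((t div b) * b))"
    by (simp add: coprime_below_def mult.commute)
  also have "\<dots> = (\<Sum>(b, a)\<in>Sigma {1..t} (\<lambda>b. {a. real a < of_rat \<sigma> * real b \<and> coprime a b}). real ((t div b) * b))"
    by (rule sum.Sigma) (auto simp: finite_nat_below)
  also have "\<dots> = sum (width t) (slopes t 0 \<sigma>)"
    by (rule sum_width_slopes_eq_sum_fractions)
  finally show ?thesis ..
qed

lemma coprime_below_self: "1 \<le> b \<Longrightarrow> coprime_below b (real b) = card {y. 1 \<le> y \<and> y \<le> b \<and> coprime b y}"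
proof -
  assume b: "1 \<le> b"
  have "bij_betw (\<lambda>a. if a = 0 then b else a) {a. real a < real b \<and> coprime a b} {y. 1 \<le> y \<and> y \<le> b \<and> coprime b y}"
    using b by (intro bij_betwI[where g = "\<lambda>y. if y = b then 0 else y"]) (auto simp: coprime_commute)
  then show ?thesis by (simp add: coprime_below_def bij_betw_same_card)
qed

lemma sum_width_unit_interval: "sum (width t) (slopes t 0 1) = real (H t)"
proof -
  have "sum (width t) (slopes t 0 1) =
      real (\<Sum>b\<in>{1..t}. \<Sum>y\<in>{y. 1 \<le> y \<and> y \<le> b \<and> coprime b y}. (t div b) * b)"
    by (simp add: sum_width_slopes_eq coprime_below_self mult.commute)
  also have "(\<Sum>b\<in>{1..t}. \<Sum>y\<in>{y. 1 \<le> y \<and> y \<le> b \<and> coprime b y}. (t div b) * b)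
      = (\<Sum>(x, y)\<in>Sigma {1..t} (\<lambda>b. {y. 1 \<le> y \<and> y \<le> b \<and> coprime b y}). (t div x) * x)"
    by (rule sum.Sigma) auto
  also have "Sigma {1..t} (\<lambda>b. {y. 1 \<le> y \<and> y \<le> b \<and> coprime b y})
      = {(x, y). 1 \<le> y \<and> y \<le> x \<and> x \<le> t \<and> coprime x y}"
    by auto
  finally show ?thesis by (simp add: H_def)
qed

lemma H_ge:
  assumes "1 \<le> t"
  shows "t \<le> H t"
proof -
  have "0 \<in> slopes t 0 1" using of_int_mem_S[OF assms, of 0] by (simp add: slopes_def)
  then have "width t 0 \<le> sum (width t) (slopes t 0 1)"
    by (rule member_le_sum[OF _ _ finite_slopes]) (auto simp: slopes_def width_nonneg)
  then show ?thesis by (simp add: width_zero sum_width_unit_interval)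
qed

section \<open>Vertices of the grid parabola\<close>

definition vx :: "nat \<Rightarrow> rat \<Rightarrow> real" where
  "vx t s = fst (edge_start t s)"

definition vy :: "nat \<Rightarrow> rat \<Rightarrow> real" where
  "vy t s = snd (edge_start t s)"

lemma edge_start_eq: "edge_start t s = (vx t s, vy t s)"
  by (simp add: vx_def vy_def)

lemma edge_start_slopes:
  "edge_start t s = (- real t / 2, 0) +
     (if 0 \<le> s then sum (vec t) (slopes t 0 s) else - sum (vec t) (slopes t s 0))"
  by (simp add: edge_start_def slopes_def)

lemma edge_start_diff:
  "s \<le> s' \<Longrightarrow> edge_start t s' - edge_start t s = sum (vec t) (slopes t s s')"
  by (cases "0 \<le> s"; cases "0 \<le> s'")
     (auto simp: edge_start_slopes sum_slopes_split[of 0 s s'] sum_slopes_split[of s 0 s']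
        sum_slopes_split[of s s' 0])

lemma vx_diff: "s \<le> s' \<Longrightarrow> vx t s' - vx t s = sum (width t) (slopes t s s')"
  using arg_cong[where f = fst, OF edge_start_diff[of s s' t]] by (simp add: vx_def fst_sum vec_eq)

lemma vy_diff: "s \<le> s' \<Longrightarrow> vy t s' - vy t s = (\<Sum>r\<in>slopes t s s'. width t r * of_rat r)"
  using arg_cong[where f = snd, OF edge_start_diff[of s s' t]] by (simp add: vy_def snd_sum vec_eq)

lemma vx_zero: "vx t 0 = - real t / 2"
  by (simp add: vx_def edge_start_slopes slopes_empty)

lemma vy_zero: "vy t 0 = 0"
  by (simp add: vy_def edge_start_slopes slopes_empty)

lemma vx_of_int: "vx t (of_int n) = - real t / 2 + of_int n * real (H t)"
proof -
  have "vx t (of_int (i + 1)) - vx t (of_int i) = of_int (i + 1) * real (H t) - of_int i * real (H t)" for i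
  proof -
    have "sum (width t) (slopes t (of_int i) (of_int i + 1)) = real (H t)"
      by (simp only: sum_slopes_unit_interval width_add_of_int sum_width_unit_interval)
    then show ?thesis using vx_diff[of "of_int i" "of_int i + 1" t] by (simp add: algebra_simps)
  qed
  from int_difference_eq[where f = "\<lambda>n. vx t (of_int n)", OF this, of n] show ?thesis
    by (simp add: vx_zero eq_diff_eq)
qed

text \<open>The reflection r \<mapsto> 1 - r of the slopes in (0,1) preserves widths.\<close>
lemma sum_width_mult_slope_unit_interval:
  assumes "1 \<le> t"
  shows "(\<Sum>r\<in>slopes t 0 1. width t r * of_rat r) = (real (H t) - real t) / 2"
proof -
  define J where "J = slopes t 0 1 - {0}"
  have J: "slopes t 0 1 = insert 0 J" "0 \<notin> J" "finite J"
    using of_int_mem_S[OF assms, of 0] finite_slopes by (auto simp: J_def slopes_def)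
  have "bij_betw (\<lambda>r. 1 - r) J J"
    by (intro bij_betwI[where g = "\<lambda>r. 1 - r"]) (auto simp: J_def slopes_def one_minus_mem_S_iff)
  from sum.reindex_bij_betw[OF this, of "\<lambda>r. width t r * of_rat r"]
  have "(\<Sum>r\<in>J. width t r * of_rat r) = (\<Sum>r\<in>J. width t (1 - r) * of_rat (1 - r))"
    by simp
  also have "\<dots> = sum (width t) J - (\<Sum>r\<in>J. width t r * of_rat r)"
    by (simp add: width_one_minus of_rat_diff algebra_simps sum_subtractf)
  finally have "2 * (\<Sum>r\<in>J. width t r * of_rat r) = sum (width t) J" by simp
  moreover have "real (H t) = real t + sum (width t) J"
    using J by (simp flip: sum_width_unit_interval add: width_zero)
  ultimately show ?thesis using J by simp
qed

lemma vy_of_int: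
  assumes "1 \<le> t"
  shows "vy t (of_int n) = (real (H t) * (of_int n)\<^sup>2 - real t * of_int n) / 2"
proof -
  let ?g = "\<lambda>n. (real (H t) * (of_int n)\<^sup>2 - real t * of_int n) / 2"
  have "vy t (of_int (i + 1)) - vy t (of_int i) =
      (\<Sum>r\<in>slopes t 0 1. width t r * of_rat r + width t r * of_int i)" for i
  proof -
    have "(\<Sum>r\<in>slopes t (of_int i) (of_int i + 1). width t r * of_rat r) =
        (\<Sum>r\<in>slopes t 0 1. width t (r + of_int i) * of_rat (r + of_int i))"
      by (simp only: sum_slopes_unit_interval)
    then show ?thesis
      using vy_diff[of "of_int i" "of_int i + 1" t]
      by (simp add: width_add_of_int of_rat_add algebra_simps)
  qed
  also have "\<dots> i = ?g (i + 1) - ?g i" for i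
    by (simp add: sum.distrib sum_width_mult_slope_unit_interval[OF assms] sum_width_unit_interval
        flip: sum_distrib_right) (simp add: power2_eq_square field_simps)
  finally show ?thesis
    using int_difference_eq[where f = "\<lambda>n. vy t (of_int n)" and g = ?g] by (simp add: vy_zero)
qed

section \<open>The grid parabola as a graph\<close>

lemma mem_grid_parabola_iff:
  "(x, y) \<in> grid_parabola t \<longleftrightarrow>
     (\<exists>s\<in>S t. vx t s \<le> x \<and> x \<le> vx t s + width t s \<and> y = vy t s + of_rat s * (x - vx t s))"
proof -
  have "(x, y) \<in> closed_segment (edge_start t s) (edge_start t s + vec t s) \<longleftrightarrow>
      vx t s \<le> x \<and> x \<le> vx t s + width t s \<and> y = vy t s + of_rat s * (x - vx t s)"
    if "s \<in> S t" for s
    using closed_segment_graph_iff[of "width t s" x y "vx t s" "vy t s" "of_rat s"] width_ge_1[OF that]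
    by (simp add: edge_start_eq vec_eq)
  then show ?thesis by (auto simp: grid_parabola_def)
qed

lemma edge_start_next:
  assumes "s < s'" "slopes t s s' = {s}"
  shows "edge_start t s' = edge_start t s + vec t s"
  using edge_start_diff[of s s' t] assms by (simp add: diff_eq_eq add.commute)

lemma vx_add_width_less:
  assumes "s \<in> S t" "q \<in> S t" "s < q" "q < s'"
  shows "vx t s + width t s < vx t s'"
proof -
  have "width t s + width t q \<le> sum (width t) (slopes t s s')"
    using assms sum_mono2[OF finite_slopes, of "{s, q}" t s s' "width t"]
    by (auto simp: slopes_def width_nonneg)
  then show ?thesis
    using vx_diff[of s s' t] width_ge_1[OF assms(2)] assms by simp
qed

lemma exists_next_slope:
  assumes "s \<in> S t"
  obtains s' where "s' \<in> S t" "s < s'" "slopes t s s' = {s}"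
proof -
  define B where "B = {q \<in> S t. s < q \<and> q \<le> s + 1}"
  have "s + 1 \<in> B"
    using assms add_of_int_mem_S_iff[of s 1 t] by (simp add: B_def)
  moreover have "finite B"
    by (rule finite_subset[OF _ finite_slopes[of t s "s + 2"]]) (auto simp: B_def slopes_def)
  ultimately have "Min B \<in> B" "\<forall>q\<in>B. Min B \<le> q"
    by (auto intro: Min_in)
  then have "slopes t s (Min B) = {s}"
    using assms by (force simp: B_def slopes_def)
  with \<open>Min B \<in> B\<close> show ?thesis by (intro that) (auto simp: B_def)
qed

lemma grid_parabola_covers:
  assumes "1 \<le> t"
  obtains s where "s \<in> S t" "vx t s \<le> x" "x < vx t s + width t s"
proof -
  define n where "n = \<lfloor>(x + real t / 2) / real (H t)\<rfloor>"
  have H: "0 < real (H t)" using H_ge[OF assms] assms by simp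
  have "of_int n \<le> (x + real t / 2) / real (H t)" "(x + real t / 2) / real (H t) < of_int n + 1"
    unfolding n_def by linarith+
  then have n: "vx t (of_int n) \<le> x" "x < vx t (of_int n + 1)"
    using H vx_of_int[of t n] vx_of_int[of t "n + 1"] by (simp_all add: field_simps)
  define A where "A = {r \<in> slopes t (of_int n) (of_int n + 1). vx t r \<le> x}"
  have "of_int n \<in> A"
    using n of_int_mem_S[OF assms] by (simp add: A_def slopes_def)
  moreover have "finite A" by (simp add: A_def finite_slopes)
  ultimately have "Max A \<in> A" "\<forall>r\<in>A. r \<le> Max A" by (auto intro: Max_in)
  then have s: "Max A \<in> S t" "vx t (Max A) \<le> x" "Max A < of_int n + 1"
    by (auto simp: A_def slopes_def)
  obtain s' where s': "s' \<in> S t" "Max A < s'" "slopes t (Max A) s' = {Max A}"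
    using exists_next_slope[OF s(1)] .
  have "x < vx t s'"
  proof (cases "s' < of_int n + 1")
    case True
    then have "s' \<in> slopes t (of_int n) (of_int n + 1)"
      using s'(1,2) \<open>Max A \<in> A\<close> by (auto simp: A_def slopes_def)
    show ?thesis
    proof (rule ccontr)
      assume "\<not> x < vx t s'"
      with \<open>s' \<in> slopes t (of_int n) (of_int n + 1)\<close> have "s' \<in> A" by (simp add: A_def)
      with s'(2) \<open>\<forall>r\<in>A. r \<le> Max A\<close> show False by force
    qed
  next
    case False
    have "of_int n + 1 \<in> S t" using of_int_mem_S[OF assms, of "n + 1"] by simp
    moreover have "of_int n + 1 \<notin> slopes t (Max A) s'" using s'(3) s(3) by auto
    ultimately have "\<not> of_int n + 1 < s'" using s(3) by (simp add: slopes_def)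
    with False n show ?thesis by simp
  qed
  moreover have "vx t s' = vx t (Max A) + width t (Max A)"
    using edge_start_next[OF s'(2,3)] by (simp add: vx_def vec_eq)
  ultimately show ?thesis using s by (intro that) auto
qed

lemma edge_values_agree:
  assumes "s \<in> S t" "s' \<in> S t" "s < s'" "x \<le> vx t s + width t s" "vx t s' \<le> x"
  shows "vy t s + of_rat s * (x - vx t s) = vy t s' + of_rat s' * (x - vx t s')"
proof -
  have "\<not> (q \<in> S t \<and> s < q \<and> q < s')" for q
    using vx_add_width_less[OF assms(1), of q s'] assms(4,5) by auto
  then have "slopes t s s' = {s}"
    using assms(1,3) by (auto simp: slopes_def) (metis order_le_less)
  from edge_start_next[OF assms(3) this]
  have "vx t s' = vx t s + width t s" "vy t s' = vy t s + width t s * of_rat s"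
    by (simp_all add: vx_def vy_def vec_eq)
  moreover have "x = vx t s'" using assms(4,5) calculation(1) by linarith
  ultimately show ?thesis by (simp add: algebra_simps)
qed

lemma P_eq_edge:
  assumes "s \<in> S t" "vx t s \<le> x" "x \<le> vx t s + width t s"
  shows "P t x = vy t s + of_rat s * (x - vx t s)"
  unfolding P_def
proof (rule the_equality)
  show "(x, vy t s + of_rat s * (x - vx t s)) \<in> grid_parabola t"
    using assms by (auto simp: mem_grid_parabola_iff)
next
  fix y assume "(x, y) \<in> grid_parabola t"
  then obtain s' where "s' \<in> S t" "vx t s' \<le> x" "x \<le> vx t s' + width t s'"
      "y = vy t s' + of_rat s' * (x - vx t s')"
    by (auto simp: mem_grid_parabola_iff)
  note s' = this
  show "y = vy t s + of_rat s * (x - vx t s)"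
  proof (cases s s' rule: linorder_cases)
    case less
    then show ?thesis using edge_values_agree[OF assms(1) s'(1) less assms(3) s'(2)] s'(4) by simp
  next
    case equal
    then show ?thesis using s'(4) by simp
  next
    case greater
    then show ?thesis using edge_values_agree[OF s'(1) assms(1) greater s'(3) assms(2)] s'(4) by simp
  qed
qed

section \<open>Distance to the reference parabola\<close>

lemma vertex_identity:
  assumes "1 \<le> t" "of_int n \<le> s"
  shows "2 * real (H t) * vy t s - (vx t s)\<^sup>2 = - (real t)\<^sup>2 / 4 +
     (\<Sum>r\<in>slopes t (of_int n) s. width t r * (2 * (real (H t) * of_rat r - vx t r) - width t r))"
proof -
  define A where "A = slopes t (of_int n) s"
  define x0 where "x0 = vx t (of_int n)"
  have prefix: "sum (width t) {q\<in>A. q < r} = vx t r - x0" if "r \<in> A" for r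
  proof -
    have "{q\<in>A. q < r} = slopes t (of_int n) r" "of_int n \<le> r"
      using that by (auto simp: A_def slopes_def)
    then show ?thesis using vx_diff[of "of_int n" r t] by (simp add: x0_def)
  qed
  have "finite A" by (simp add: A_def finite_slopes)
  have "(sum (width t) A)\<^sup>2 = (\<Sum>r\<in>A. width t r * (width t r + 2 * (vx t r - x0)))"
    using power2_sum_eq_sum_prefix[OF \<open>finite A\<close>, of "width t"] by (simp add: prefix cong: sum.cong)
  have "(vx t s)\<^sup>2 - x0\<^sup>2 = (sum (width t) A)\<^sup>2 + 2 * x0 * sum (width t) A"
    using vx_diff[OF assms(2)] by (simp add: A_def x0_def power2_eq_square algebra_simps)
  also have "\<dots> = (\<Sum>r\<in>A. width t r * (width t r + 2 * vx t r))"
    by (simp add: \<open>(sum (width t) A)\<^sup>2 = _\<close> sum_distrib_left sum.distrib[symmetric] algebra_simps)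
  finally have "(vx t s)\<^sup>2 = x0\<^sup>2 + (\<Sum>r\<in>A. width t r * (width t r + 2 * vx t r))" by simp
  moreover have "(\<Sum>r\<in>A. width t r * (2 * (real (H t) * of_rat r - vx t r) - width t r)) =
      (\<Sum>r\<in>A. width t r * (2 * real (H t) * of_rat r)) - (\<Sum>r\<in>A. width t r * (width t r + 2 * vx t r))"
    by (simp add: sum_subtractf[symmetric] algebra_simps)
  moreover have "2 * real (H t) * vy t s =
      2 * real (H t) * vy t (of_int n) + (\<Sum>r\<in>A. width t r * (2 * real (H t) * of_rat r))"
    using vy_diff[OF assms(2)] by (simp add: A_def sum_distrib_left algebra_simps)
  moreover have "2 * real (H t) * vy t (of_int n) - x0\<^sup>2 = - (real t)\<^sup>2 / 4"
    by (simp add: x0_def vx_of_int vy_of_int[OF assms(1)] power2_eq_square field_simps)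
  ultimately show ?thesis unfolding A_def by linarith
qed

lemma vertex_deviation_bound:
  assumes "1 \<le> t" and dev: "\<And>r. \<bar>real (H t) * of_rat r - vx t r\<bar> \<le> E"
  shows "\<bar>2 * real (H t) * vy t s - (vx t s)\<^sup>2\<bar> \<le> real (H t) * (2 * E + 5 / 4 * real t)"
proof -
  define A where "A = slopes t (of_int \<lfloor>s\<rfloor>) s"
  define D where "D = (\<Sum>r\<in>A. width t r * (2 * (real (H t) * of_rat r - vx t r) - width t r))"
  have identity: "2 * real (H t) * vy t s - (vx t s)\<^sup>2 = - (real t)\<^sup>2 / 4 + D"
    unfolding A_def D_def by (rule vertex_identity[OF assms(1)]) simp
  have "\<bar>width t r * (2 * (real (H t) * of_rat r - vx t r) - width t r)\<bar> \<le> width t r * (2 * E + real t)"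
    if "r \<in> A" for r
  proof -
    have "0 \<le> width t r" using that by (simp add: A_def slopes_def width_nonneg)
    moreover have "\<bar>2 * (real (H t) * of_rat r - vx t r) - width t r\<bar> \<le> 2 * E + real t"
      using dev[of r] width_le[of t r] calculation by (simp add: abs_le_iff)
    ultimately show ?thesis by (simp add: abs_mult mult_left_mono)
  qed
  then have "\<bar>D\<bar> \<le> sum (width t) A * (2 * E + real t)"
    unfolding D_def by (simp add: sum_distrib_right order_trans[OF sum_abs sum_mono])
  also have "\<dots> \<le> real (H t) * (2 * E + real t)"
  proof (rule mult_right_mono)
    have "sum (width t) A \<le> sum (width t) (slopes t (of_int \<lfloor>s\<rfloor>) (of_int \<lfloor>s\<rfloor> + 1))"
      unfolding A_def by (rule sum_width_slopes_mono) (use floor_correct[of s] in \<open>auto simp: slopes_def\<close>)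
    also have "\<dots> = real (H t)"
      by (simp only: sum_slopes_unit_interval width_add_of_int sum_width_unit_interval)
    finally show "sum (width t) A \<le> real (H t)" .
    show "0 \<le> 2 * E + real t" using dev[of 0] by linarith
  qed
  moreover have "(real t)\<^sup>2 \<le> real (H t) * real t"
    using H_ge[OF assms(1)] by (simp add: power2_eq_square mult_right_mono)
  ultimately have "\<bar>D - (real t)\<^sup>2 / 4\<bar> \<le> real (H t) * (2 * E + real t) + real (H t) * real t / 4"
    by (simp add: abs_le_iff) (use zero_le_power2[of "real t"] in linarith)
  then show ?thesis
    unfolding identity by (simp add: algebra_simps)
qed

lemma P_minus_Pi_ref_bound:
  assumes "1 \<le> t" and dev: "\<And>r. \<bar>real (H t) * of_rat r - vx t r\<bar> \<le> E"
  shows "\<bar>P t x - Pi_ref t x\<bar> \<le> 2 * E + 2 * real t"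
proof -
  obtain s where s: "s \<in> S t" "vx t s \<le> x" "x < vx t s + width t s"
    using grid_parabola_covers[OF assms(1)] .
  define \<theta> where "\<theta> = x - vx t s"
  define e where "e = real (H t) * of_rat s - vx t s"
  have \<theta>: "0 \<le> \<theta>" "\<theta> \<le> real t" using s width_le[of t s] by (auto simp: \<theta>_def)
  have H: "real t \<le> real (H t)" "0 < real (H t)" using H_ge[OF assms(1)] assms(1) by auto
  have P: "P t x = vy t s + of_rat s * \<theta>"
    using P_eq_edge[OF s(1,2) less_imp_le[OF s(3)]] by (simp add: \<theta>_def)
  have x: "x = vx t s + \<theta>" by (simp add: \<theta>_def)
  have "2 * real (H t) * (P t x - Pi_ref t x) = 2 * real (H t) * P t x - x\<^sup>2"
    using H(2) by (simp add: Pi_ref_def field_simps)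
  also have "\<dots> = (2 * real (H t) * vy t s - (vx t s)\<^sup>2) + \<theta> * (2 * e - \<theta>)"
    unfolding P by (simp add: x e_def power2_eq_square algebra_simps)
  finally have identity: "2 * real (H t) * (P t x - Pi_ref t x) =
      (2 * real (H t) * vy t s - (vx t s)\<^sup>2) + \<theta> * (2 * e - \<theta>)" .
  have "\<bar>\<theta> * (2 * e - \<theta>)\<bar> \<le> real (H t) * (2 * E + real t)"
  proof -
    have "\<bar>2 * e - \<theta>\<bar> \<le> 2 * E + real t"
      using dev[of s] \<theta> by (simp add: e_def abs_le_iff)
    then have "\<bar>\<theta> * (2 * e - \<theta>)\<bar> \<le> real t * (2 * E + real t)"
      using \<theta> by (simp add: abs_mult mult_mono)
    also have "\<dots> \<le> real (H t) * (2 * E + real t)"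
      using H(1) dev[of 0] by (intro mult_right_mono) auto
    finally show ?thesis .
  qed
  then have "\<bar>2 * real (H t) * (P t x - Pi_ref t x)\<bar> \<le>
      real (H t) * (2 * E + 5 / 4 * real t) + real (H t) * (2 * E + real t)"
    unfolding identity using vertex_deviation_bound[OF assms, of s] abs_triangle_ineq by (smt (verit))
  also have "\<dots> = 2 * real (H t) * (2 * E + 9 / 8 * real t)" by (simp add: algebra_simps)
  finally have "2 * real (H t) * \<bar>P t x - Pi_ref t x\<bar> \<le> 2 * real (H t) * (2 * E + 9 / 8 * real t)"
    using H(2) by (simp add: abs_mult)
  then have "\<bar>P t x - Pi_ref t x\<bar> \<le> 2 * E + 9 / 8 * real t"
    using H(2) by simp
  then show ?thesis by simp
qed

section \<open>Counting integers coprime to a modulus\<close>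

definition sieve_count :: "nat set \<Rightarrow> real \<Rightarrow> nat" where
  "sieve_count Ps x = card {a. real a < x \<and> (\<forall>p\<in>Ps. \<not> p dvd a)}"

lemma sieve_count_empty: "0 \<le> x \<Longrightarrow> \<bar>real (sieve_count {} x) - x\<bar> \<le> 1"
proof -
  assume "0 \<le> x"
  have "{a :: nat. real a < x} = {..<nat \<lceil>x\<rceil>}" by (auto, linarith+)
  with \<open>0 \<le> x\<close> show ?thesis by (simp add: sieve_count_def) linarith
qed

text \<open>Removing the multiples of a new prime p: they are p times the survivors below x / p.\<close>
lemma sieve_count_insert:
  assumes "prime p" "\<forall>q\<in>Ps. prime q" "p \<notin> Ps"
  shows "real (sieve_count (insert p Ps) x) = real (sieve_count Ps x) - real (sieve_count Ps (x / real p))"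
proof -
  define U where "U = {a. real a < x \<and> (\<forall>q\<in>Ps. \<not> q dvd a)}"
  define W where "W = {a. real a < x / real p \<and> (\<forall>q\<in>Ps. \<not> q dvd a)}"
  have p: "0 < real p" using assms(1) prime_gt_0_nat by simp
  have ndvd: "q dvd p * k \<longleftrightarrow> q dvd k" if "q \<in> Ps" for q k
    using assms primes_dvd_imp_eq[of q p] that by (auto simp: prime_dvd_mult_iff)
  have "{a \<in> U. p dvd a} = (*) p ` W"
  proof (intro equalityI subsetI)
    fix a assume "a \<in> {a \<in> U. p dvd a}"
    then obtain k where "a = p * k" "a \<in> U" by (auto elim: dvdE)
    with ndvd p show "a \<in> (*) p ` W" by (auto simp: U_def W_def field_simps mult.commute)
  next
    fix a assume "a \<in> (*) p ` W"
    with ndvd p show "a \<in> {a \<in> U. p dvd a}" by (auto simp: U_def W_def field_simps mult.commute)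
  qed
  then have sub: "(*) p ` W \<subseteq> U" by blast
  have "finite U" by (simp add: U_def finite_nat_below)
  have "{a. real a < x \<and> (\<forall>q\<in>insert p Ps. \<not> q dvd a)} = U - (*) p ` W"
    using \<open>{a \<in> U. p dvd a} = (*) p ` W\<close> by (auto simp: U_def)
  moreover have "card ((*) p ` W) = card W" using p by (intro card_image) (auto simp: inj_on_def)
  ultimately show ?thesis
    using card_Diff_subset[OF finite_subset[OF sub \<open>finite U\<close>] sub] card_mono[OF \<open>finite U\<close> sub]
    by (simp add: sieve_count_def of_nat_diff flip: U_def W_def)
qed

lemma sieve_count_approx:
  assumes "finite Ps" "\<forall>p\<in>Ps. prime p" "0 \<le> x"
  shows "\<bar>real (sieve_count Ps x) - x * (\<Prod>p\<in>Ps. 1 - 1 / real p)\<bar> \<le> 2 ^ card Ps"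
  using assms
proof (induction Ps arbitrary: x rule: finite_induct)
  case empty
  then show ?case using sieve_count_empty by simp
next
  case (insert p Ps)
  define \<rho> where "\<rho> = (\<Prod>p\<in>Ps. 1 - 1 / real p)"
  have "0 < real p" using insert.prems prime_gt_0_nat by simp
  then have IH: "\<bar>real (sieve_count Ps x) - x * \<rho>\<bar> \<le> 2 ^ card Ps"
      "\<bar>real (sieve_count Ps (x / real p)) - x / real p * \<rho>\<bar> \<le> 2 ^ card Ps"
    using insert.IH[of x] insert.IH[of "x / real p"] insert.prems by (simp_all add: \<rho>_def)
  have "real (sieve_count (insert p Ps) x) - x * (\<Prod>p\<in>insert p Ps. 1 - 1 / real p)
      = (real (sieve_count Ps x) - x * \<rho>) - (real (sieve_count Ps (x / real p)) - x / real p * \<rho>)"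
    using insert by (simp add: sieve_count_insert \<rho>_def algebra_simps)
  with IH insert.hyps show ?case by (simp add: abs_le_iff)
qed

lemma coprime_iff_prime_factors_not_dvd:
  fixes a b :: nat
  assumes "b \<noteq> 0"
  shows "coprime a b \<longleftrightarrow> (\<forall>p\<in>prime_factors b. \<not> p dvd a)"
proof
  show "coprime a b \<Longrightarrow> \<forall>p\<in>prime_factors b. \<not> p dvd a"
    by (metis coprime_common_divisor in_prime_factors_iff not_prime_unit)
  assume "\<forall>p\<in>prime_factors b. \<not> p dvd a"
  with assms show "coprime a b"
    by (metis coprime_iff_gcd_eq_1 dvd_trans gcd_dvd1 gcd_dvd2 in_prime_factors_iff prime_factor_nat)
qed

lemma coprime_below_eq_sieve_count: "b \<noteq> 0 \<Longrightarrow> coprime_below b x = sieve_count (prime_factors b) x"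
  by (simp add: coprime_below_def sieve_count_def coprime_iff_prime_factors_not_dvd)

lemma coprime_below_scaled:
  assumes "1 \<le> b" "0 \<le> \<sigma>" "\<sigma> \<le> 1"
  shows "\<bar>real (coprime_below b (\<sigma> * real b)) - \<sigma> * real (coprime_below b (real b))\<bar>
    \<le> 2 * 2 ^ card (prime_factors b)"
proof -
  define K where "K = real b * (\<Prod>p\<in>prime_factors b. 1 - 1 / real p)"
  have approx: "\<bar>real (coprime_below b x) - x / real b * K\<bar> \<le> 2 ^ card (prime_factors b)"
    if "0 \<le> x" for x
    using sieve_count_approx[of "prime_factors b" x] that assms(1)
    by (simp add: coprime_below_eq_sieve_count K_def in_prime_factors_imp_prime)
  have "\<bar>\<sigma> * real (coprime_below b (real b)) - \<sigma> * K\<bar> = \<sigma> * \<bar>real (coprime_below b (real b)) - K\<bar>"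
    using assms by (simp add: abs_mult flip: right_diff_distrib)
  also have "\<dots> \<le> \<sigma> * 2 ^ card (prime_factors b)"
    using approx[of "real b"] assms by (intro mult_left_mono) auto
  also have "\<dots> \<le> 2 ^ card (prime_factors b)" using assms by simp
  finally show ?thesis
    using approx[of "\<sigma> * real b"] assms by (simp add: abs_le_iff)
qed

lemma prime_factors_prod_primes:
  assumes "D \<subseteq> prime_factors (b :: nat)"
  shows "prime_factors (\<Prod>D) = D"
proof -
  have "finite D" using assms finite_subset by blast
  moreover have primes: "\<forall>p\<in>D. prime p" using assms in_prime_factors_imp_prime by blast
  ultimately have "prime_factors (\<Prod>D) = \<Union>((prime_factors \<circ> (\<lambda>p. p)) ` D)"
    by (intro prime_factors_prod) auto
  also have "\<dots> = D" using primes by (auto simp: prime_prime_factors)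
  finally show ?thesis .
qed

lemma prod_primes_dvd:
  assumes "b \<noteq> 0" "D \<subseteq> prime_factors (b :: nat)"
  shows "\<Prod>D dvd b"
proof -
  have "\<Prod>D dvd \<Prod>(prime_factors b)" by (rule prod_dvd_prod_subset) (use assms in auto)
  also have "\<dots> dvd (\<Prod>p\<in>prime_factors b. p ^ multiplicity p b)"
    by (rule prod_dvd_prod) (simp add: prime_factors_multiplicity dvd_power)
  also have "\<dots> = b" using prod_prime_factors[OF assms(1)] by simp
  finally show ?thesis .
qed

lemma two_power_card_prime_factors_le:
  assumes "b \<noteq> (0 :: nat)"
  shows "2 ^ card (prime_factors b) \<le> card {d. d dvd b}"
proof -
  have "inj_on Prod (Pow (prime_factors b))"
    by (rule inj_on_inverseI[where g = prime_factors]) (auto simp: prime_factors_prod_primes)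
  moreover have "Prod ` Pow (prime_factors b) \<subseteq> {d. d dvd b}"
    using prod_primes_dvd[OF assms] by auto
  moreover have "finite {d. d dvd b}" using assms by (simp add: finite_divisors_nat)
  ultimately show ?thesis
    using card_inj_on_le[of Prod "Pow (prime_factors b)"] by (simp add: card_Pow)
qed

lemma card_multiples_atLeastAtMost: "1 \<le> d \<Longrightarrow> card {b \<in> {1..t}. d dvd b} = t div d"
proof -
  assume "1 \<le> d"
  have "{b \<in> {1..t}. d dvd b} = (\<lambda>k. d * k) ` {1..t div d}"
  proof (intro equalityI subsetI)
    fix b assume "b \<in> {b \<in> {1..t}. d dvd b}"
    then obtain k where "b = d * k" "1 \<le> b" "b \<le> t" by (auto elim: dvdE)
    with \<open>1 \<le> d\<close> show "b \<in> (\<lambda>k. d * k) ` {1..t div d}"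
      by (auto intro!: imageI simp: less_eq_div_iff_mult_less_eq mult.commute)
  next
    fix b assume "b \<in> (\<lambda>k. d * k) ` {1..t div d}"
    with \<open>1 \<le> d\<close> show "b \<in> {b \<in> {1..t}. d dvd b}"
      by (auto simp: less_eq_div_iff_mult_less_eq mult.commute)
  qed
  moreover have "inj_on (\<lambda>k. d * k) {1..t div d}" using \<open>1 \<le> d\<close> by (auto simp: inj_on_def)
  ultimately show ?thesis by (simp add: card_image)
qed

lemma sum_card_divisors: "(\<Sum>b=1..t. card {d. d dvd b}) = (\<Sum>d=1..t. t div d)"
proof -
  have "card {d. d dvd b} = (\<Sum>d=1..t. if d dvd b then 1 else 0)" if "b \<in> {1..t}" for b
  proof -
    have "{d. d dvd b} = {d \<in> {1..t}. d dvd b}"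
      using that by (auto dest: dvd_imp_le intro: Suc_leI simp: dvd_pos_nat)
    then show ?thesis by (simp add: sum.If_cases Int_def conj_ac)
  qed
  then have "(\<Sum>b=1..t. card {d. d dvd b}) = (\<Sum>b=1..t. \<Sum>d=1..t. if d dvd b then 1 else 0)"
    by (rule sum.cong[OF refl])
  also have "\<dots> = (\<Sum>d=1..t. \<Sum>b=1..t. if d dvd b then 1 else 0)" by (rule sum.swap)
  also have "\<dots> = (\<Sum>d=1..t. t div d)"
  proof (rule sum.cong[OF refl])
    fix d :: nat assume "d \<in> {1..t}"
    have "(\<Sum>b=1..t. if d dvd b then 1 else 0) = card {b \<in> {1..t}. d dvd b}"
      by (simp add: sum.If_cases Int_def)
    with \<open>d \<in> {1..t}\<close> card_multiples_atLeastAtMost[of d t]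
    show "(\<Sum>b=1..t. if d dvd b then 1 else 0) = t div d" by simp
  qed
  finally show ?thesis .
qed

lemma sum_div_le: "1 \<le> t \<Longrightarrow> (\<Sum>d=1..t. real (t div d)) \<le> real t * (1 + ln (real t))"
proof -
  assume "1 \<le> t"
  have "(\<Sum>d=1..t. real (t div d)) \<le> (\<Sum>d=1..t. real t / real d)"
    by (rule sum_mono) (rule of_nat_div_le_of_nat)
  also have "\<dots> = real t * harm t"
    by (simp add: harm_def sum_distrib_left divide_inverse)
  also have "\<dots> \<le> real t * (1 + ln (real t))"
    using euler_mascheroni_sequence_decreasing[of 1 t] \<open>1 \<le> t\<close> by (intro mult_left_mono) (auto simp: harm_def)
  finally show ?thesis .
qed

section \<open>The discrepancy and the main theorem\<close>

definition discrepancy :: "nat \<Rightarrow> rat \<Rightarrow> real" where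
  "discrepancy t \<sigma> = real (H t) * of_rat \<sigma> - sum (width t) (slopes t 0 \<sigma>)"

lemma H_mult_minus_vx:
  "real (H t) * of_rat r - vx t r = discrepancy t (r - of_int \<lfloor>r\<rfloor>) + real t / 2"
proof -
  define n where "n = \<lfloor>r\<rfloor>"
  define \<sigma> where "\<sigma> = r - of_int n"
  have "of_int n \<le> r" by (simp add: n_def)
  have "vx t r - vx t (of_int n) = sum (width t) (slopes t (0 + of_int n) (\<sigma> + of_int n))"
    using vx_diff[OF \<open>of_int n \<le> r\<close>] by (simp add: \<sigma>_def)
  also have "\<dots> = sum (width t) (slopes t 0 \<sigma>)"
    by (simp only: sum_slopes_add_of_int width_add_of_int)
  finally show ?thesis
    by (simp add: discrepancy_def vx_of_int \<sigma>_def of_rat_diff algebra_simps flip: n_def)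
qed

lemma discrepancy_bound:
  assumes "1 \<le> t" "0 \<le> \<sigma>" "\<sigma> \<le> 1"
  shows "\<bar>discrepancy t \<sigma>\<bar> \<le> 2 * (real t)\<^sup>2 * (1 + ln (real t))"
proof -
  define s :: real where "s = of_rat \<sigma>"
  define w where "w = (\<lambda>b. real ((t div b) * b))"
  define c where "c = (\<lambda>b. s * real (coprime_below b (real b)) - real (coprime_below b (s * real b)))"
  have s: "0 \<le> s" "s \<le> 1" using assms by (simp_all add: s_def)
  have H: "real (H t) = (\<Sum>b=1..t. w b * real (coprime_below b (real b)))"
    using sum_width_slopes_eq[of t 1] by (simp add: w_def sum_width_unit_interval)
  have "discrepancy t \<sigma> = real (H t) * s - (\<Sum>b=1..t. w b * real (coprime_below b (s * real b)))"
    by (simp add: discrepancy_def s_def w_def sum_width_slopes_eq)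
  also have "\<dots> = (\<Sum>b=1..t. w b * c b)"
    unfolding H c_def by (simp add: sum_distrib_left right_diff_distrib sum_subtractf mult_ac)
  also have "\<bar>\<dots>\<bar> \<le> (\<Sum>b=1..t. real t * (2 * real (card {d. d dvd b})))"
  proof (rule order_trans[OF sum_abs sum_mono])
    fix b assume b: "b \<in> {1..t}"
    have "\<bar>c b\<bar> \<le> 2 * 2 ^ card (prime_factors b)"
      using coprime_below_scaled[of b s] s b by (simp add: c_def abs_minus_commute)
    also have "(2 :: real) ^ card (prime_factors b) \<le> real (card {d. d dvd b})"
      using two_power_card_prime_factors_le[of b] b by (metis of_nat_le_iff of_nat_numeral of_nat_power not_one_le_zero atLeastAtMost_iff)
    finally have "\<bar>c b\<bar> \<le> 2 * real (card {d. d dvd b})" by simp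
    moreover have "0 \<le> w b" "w b \<le> real t"
      by (simp_all only: w_def of_nat_0_le_iff of_nat_le_iff div_times_less_eq_dividend)
    ultimately show "\<bar>w b * c b\<bar> \<le> real t * (2 * real (card {d. d dvd b}))"
      unfolding abs_mult by (intro mult_mono) auto
  qed
  also have "\<dots> = 2 * real t * real (\<Sum>b=1..t. card {d. d dvd b})"
    by (simp add: sum_distrib_left mult_ac)
  also have "\<dots> = 2 * real t * (\<Sum>d=1..t. real (t div d))"
    by (simp only: sum_card_divisors of_nat_sum)
  also have "\<dots> \<le> 2 * real t * (real t * (1 + ln (real t)))"
    using sum_div_le[OF assms(1)] by (intro mult_left_mono) auto
  finally show ?thesis by (simp add: power2_eq_square mult_ac)
qed

lemma H_mult_minus_vx_bound:
  assumes "1 \<le> t"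
  shows "\<bar>real (H t) * of_rat r - vx t r\<bar> \<le> 2 * (real t)\<^sup>2 * (1 + ln (real t)) + real t / 2"
proof -
  have "0 \<le> r - of_int \<lfloor>r\<rfloor>" "r - of_int \<lfloor>r\<rfloor> \<le> 1"
    using floor_correct[of r] by linarith+
  from discrepancy_bound[OF assms this] show ?thesis
    unfolding H_mult_minus_vx by linarith
qed

theorem proposition2:
  shows "\<exists>C. \<forall>\<^sub>F t in sequentially.
           (\<forall>x::real. \<bar>P t x - Pi_ref t x\<bar> \<le> C * (real t)\<^sup>2 * ln (real t))"
proof (intro exI[of _ 11] eventually_sequentiallyI[of 3] allI)
  fix t :: nat and x :: real
  assume "3 \<le> t"
  then have "exp 1 \<le> real t" using exp_le by linarith
  then have ln: "1 \<le> ln (real t)" using ln_le_cancel_iff[of "exp 1" "real t"] \<open>3 \<le> t\<close> by simp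
  have "(real t)\<^sup>2 \<le> (real t)\<^sup>2 * ln (real t)" using ln by (simp add: mult_le_cancel_left1)
  moreover have "real t \<le> (real t)\<^sup>2" using \<open>3 \<le> t\<close> by (simp add: power2_eq_square)
  ultimately have t: "real t \<le> (real t)\<^sup>2 * ln (real t)" "(real t)\<^sup>2 \<le> (real t)\<^sup>2 * ln (real t)"
    by linarith+
  have "\<bar>P t x - Pi_ref t x\<bar> \<le> 2 * (2 * (real t)\<^sup>2 * (1 + ln (real t)) + real t / 2) + 2 * real t"
    using \<open>3 \<le> t\<close> by (intro P_minus_Pi_ref_bound H_mult_minus_vx_bound) auto
  also have "\<dots> \<le> 11 * (real t)\<^sup>2 * ln (real t)"
    using t by (simp add: algebra_simps)
  finally show "\<bar>P t x - Pi_ref t x\<bar> \<le> 11 * (real t)\<^sup>2 * ln (real t)" .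
qed

end
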